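(* Let $(\mathbf{P}^0_t)_{t\ge0}$ be the semi-group defined by $\mathbf{P}^0_t f(x)=\mathbb{E}\big[f\big(\max(x-t,\ Z+\log(1-e^{-t}))\big)\big]$ with $Z$ standard Gumbel. Its generator $\mathscr{L}_0 f(x)=\frac{d}{dt}\mathbf{P}^0_t f(x)\big|_{t=0}$ is given, for all $f\in\mathrm{Lip}_{[2]}(\mathbb{R})$ and $x\in\mathbb{R}$, by \[ \mathscr{L}_0 f(x) = -f'(x)+e^{-x}\,\mathbb{E}\big[f(x+Y)-f(x)\big] = -f'(x)+e^{-x}\,\mathbb{E}\big[f'(x+Y)\big], \] where $Y$ has the exponential distribution $\mathcal{E}(1)$ with parameter $1$.
   Context: The standard Gumbel distribution has density $x\mapsto e^{-(x+e^{-x})}$ on $\mathbb{R}$; convention $\log 0=-\infty$. $\mathrm{Lip}_{[2]}(\mathbb{R})$ is the set of Lipschitz functions $f:\mathbb{R}\to\mathbb{R}$ whose derivative $f'$ admits a Lipschitz representative. *)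

theory Defs
  imports "HOL-Probability.Probability"
begin

definition gumbel :: "real measure" where
  "gumbel = density lborel (\<lambda>x. ennreal (exp (- (x + exp (- x)))))"

definition expo1 :: "real measure" where
  "expo1 = density lborel (exponential_density 1)"

text \<open>Lip_[2](R): f Lipschitz, differentiable, with Lipschitz derivative
  (a Lipschitz representative of the a.e. derivative of a Lipschitz f forces f to be C^1
  with that derivative everywhere).\<close>
definition Lip2 :: "(real \<Rightarrow> real) \<Rightarrow> bool" where
  "Lip2 f \<longleftrightarrow> (\<exists>C. C-lipschitz_on UNIV f) \<and> (\<forall>x. f differentiable (at x))
      \<and> (\<exists>C. C-lipschitz_on UNIV (deriv f))"

text \<open>The semigroup P^0_t; at t = 0, log 0 = -infinity so the max is x.\<close>
definition P0 :: "real \<Rightarrow> (real \<Rightarrow> real) \<Rightarrow> real \<Rightarrow> real" where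
  "P0 t f x = (if t = 0 then f x
     else (\<integral>z. f (max (x - t) (z + ln (1 - exp (- t)))) \<partial>gumbel))"

end

(*
  For t > 0 the substitution z = x - t - ln (1 - exp (- t)) + u in the Gumbel integral
  kills the part u < 0 (there the maximum is x - t) and gives
    P0 t f x = f (x - t) + b t * E[(f (x - t + Y) - f (x - t)) * exp (- b t * exp (- Y))]
  with Y ~ Exp(1) and b t = (1 - exp (- t)) * exp (t - x), so b t / t tends to exp (- x).
  Since |f (a + u) - f a| <= L * |u| and Y has a first moment, dominated convergence lets
  t tend to 0 under the expectation, which yields the generator.  The second formula is
  integration by parts against the density exp (- u): the boundary term
  (f (x + u) - f x) * exp (- u) vanishes at u = 0 and, by linear growth, as u tends to infinity.
*)
theory Submission
  imports Defs "HOL-Real_Asymp.Real_Asymp"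
begin

lemma prob_space_expo1: "prob_space expo1"
  unfolding expo1_def by (rule prob_space_exponential_density) simp

lemma space_expo1 [simp]: "space expo1 = UNIV"
  and sets_expo1 [simp]: "sets expo1 = sets borel"
  by (auto simp: expo1_def)

lemma measurable_expo1 [simp]: "measurable expo1 N = measurable borel N"
  by (rule measurable_cong_sets) simp_all

lemma exponential_density_1: "exponential_density 1 u = (if u < 0 then 0 else exp (- u))"
  by (simp add: exponential_density_def)

lemma integral_expo1_density:
  fixes g :: "real \<Rightarrow> real"
  assumes [measurable]: "g \<in> borel_measurable borel"
  shows "(\<integral>u. g u \<partial>expo1) = (\<integral>u. exponential_density 1 u * g u \<partial>lborel)"
  unfolding expo1_def by (subst integral_density) (auto simp: exponential_density_nonneg)

lemma integrable_expo1_density: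
  fixes g :: "real \<Rightarrow> real"
  assumes [measurable]: "g \<in> borel_measurable borel"
  shows "integrable expo1 g \<longleftrightarrow> integrable lborel (\<lambda>u. exponential_density 1 u * g u)"
  unfolding expo1_def by (subst integrable_density) (auto simp: exponential_density_nonneg)

lemma exponential_density_1_AE_eq:
  "AE u in lborel. exponential_density 1 u * g u = indicator {0<..} u *\<^sub>R (exp (- u) * g u)"
  using AE_lborel_singleton[of 0] by eventually_elim (auto simp: exponential_density_1)

lemma einterval_0_infinity: "einterval 0 \<infinity> = {0<..}"
  by (auto simp: einterval_def zero_ereal_def)

lemma integral_expo1_LBINT:
  fixes g :: "real \<Rightarrow> real"
  assumes [measurable]: "g \<in> borel_measurable borel"
  shows "(\<integral>u. g u \<partial>expo1) = (LBINT u=0..\<infinity>. exp (- u) * g u)"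
  unfolding integral_expo1_density[OF assms] interval_lebesgue_integral_def
    set_lebesgue_integral_def einterval_0_infinity
  by (simp add: integral_cong_AE[OF _ _ exponential_density_1_AE_eq])

lemma integrable_expo1_iff_set_integrable:
  fixes g :: "real \<Rightarrow> real"
  assumes [measurable]: "g \<in> borel_measurable borel"
  shows "integrable expo1 g \<longleftrightarrow> set_integrable lborel (einterval 0 \<infinity>) (\<lambda>u. exp (- u) * g u)"
  unfolding integrable_expo1_density[OF assms] set_integrable_def einterval_0_infinity
  by (simp add: integrable_cong_AE[OF _ _ exponential_density_1_AE_eq])

lemma integrable_expo1_abs: "integrable expo1 abs"
proof -
  have "integrable lborel (\<lambda>u. exponential_density 1 u * u)"
  proof (rule integrableI_nonneg)
    show "AE u in lborel. 0 \<le> exponential_density 1 u * u"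
      by (auto simp: exponential_density_def)
    show "(\<integral>\<^sup>+ u. ennreal (exponential_density 1 u * u) \<partial>lborel) < \<infinity>"
      using nn_integral_erlang_ith_moment[of 1 0 1] by simp
  qed simp
  moreover have "exponential_density 1 u * u = exponential_density 1 u * \<bar>u\<bar>" for u
    by (simp add: exponential_density_1)
  ultimately show ?thesis by (simp add: integrable_expo1_density)
qed

lemma lipschitz_on_UNIV_abs_diff:
  fixes f :: "real \<Rightarrow> real"
  shows "L-lipschitz_on UNIV f \<Longrightarrow> \<bar>f a - f b\<bar> \<le> L * \<bar>a - b\<bar>"
  using lipschitz_onD[of L UNIV f a b] by (simp add: dist_real_def)

lemma lipschitz_on_UNIV_borel_measurable:
  fixes f :: "real \<Rightarrow> real"
  shows "L-lipschitz_on UNIV f \<Longrightarrow> f \<in> borel_measurable borel"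
  using lipschitz_on_continuous_on borel_measurable_continuous_onI by blast

lemma lipschitz_on_UNIV_shift:
  fixes f :: "real \<Rightarrow> real"
  shows "L-lipschitz_on UNIV f \<Longrightarrow> L-lipschitz_on UNIV (\<lambda>u. f (x + u))"
  unfolding lipschitz_on_def dist_real_def by (metis add_diff_cancel_left UNIV_I)

lemma integrable_expo1_lipschitz:
  fixes g :: "real \<Rightarrow> real"
  assumes g: "L-lipschitz_on UNIV g"
  shows "integrable expo1 g"
proof (rule Bochner_Integration.integrable_bound)
  show "integrable expo1 (\<lambda>u. \<bar>g 0\<bar> + L * \<bar>u\<bar>)"
    using prob_space_expo1 integrable_expo1_abs
    by (intro Bochner_Integration.integrable_add integrable_mult_right
        finite_measure.integrable_const prob_space.finite_measure)
  show "AE u in expo1. norm (g u) \<le> norm (\<bar>g 0\<bar> + L * \<bar>u\<bar>)"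
    using lipschitz_on_UNIV_abs_diff[OF g, of _ 0] lipschitz_on_nonneg[OF g]
    by (intro AE_I2) (smt (verit) real_norm_def mult_nonneg_nonneg abs_ge_zero)
  show "g \<in> borel_measurable expo1"
    using lipschitz_on_UNIV_borel_measurable[OF g] by simp
qed

lemma lipschitz_mult_exp_neg_tendsto_0:
  fixes g :: "real \<Rightarrow> real"
  assumes g: "L-lipschitz_on UNIV g"
  shows "((\<lambda>u. g u * exp (- u)) \<longlongrightarrow> 0) at_top"
proof (rule Lim_null_comparison)
  show "((\<lambda>u. (\<bar>g 0\<bar> + L * u) * exp (- u)) \<longlongrightarrow> 0) at_top"
    by real_asymp
  show "\<forall>\<^sub>F u in at_top. norm (g u * exp (- u)) \<le> (\<bar>g 0\<bar> + L * u) * exp (- u)"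
    using eventually_ge_at_top[of 0]
  proof eventually_elim
    case (elim u)
    then have "\<bar>g u\<bar> \<le> \<bar>g 0\<bar> + L * u"
      using lipschitz_on_UNIV_abs_diff[OF g, of u 0] by simp
    then show ?case by (simp add: abs_mult)
  qed
qed

lemma integral_expo1_increment_eq_deriv:
  fixes g g' :: "real \<Rightarrow> real"
  assumes g: "L-lipschitz_on UNIV g" and g': "\<And>u. (g has_real_derivative g' u) (at u)"
    and cont: "continuous_on UNIV g'" and int: "integrable expo1 g'"
  shows "(\<integral>u. g u - g 0 \<partial>expo1) = (\<integral>u. g' u \<partial>expo1)"
proof -
  interpret prob_space expo1
    by (rule prob_space_expo1)
  have [measurable]: "g \<in> borel_measurable borel"
    using g by (rule lipschitz_on_UNIV_borel_measurable)
  have [measurable]: "g' \<in> borel_measurable borel"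
    using cont by (rule borel_measurable_continuous_onI)
  have int_g: "integrable expo1 g"
    using g by (rule integrable_expo1_lipschitz)
  have cont_g: "isCont g u" for u
    using lipschitz_on_continuous_on[OF g] by (simp add: continuous_on_eq_continuous_at)
  define F where "F = (\<lambda>u. - g u * exp (- u))"
  have "(LBINT u=0..\<infinity>. exp (- u) * (g u - g' u)) = 0 - F 0"
  proof (rule interval_integral_FTC_integrable)
    show "(F has_vector_derivative exp (- u) * (g u - g' u)) (at u)" for u
    proof -
      have "(F has_real_derivative - g' u * exp (- u) + g u * exp (- u)) (at u)"
        unfolding F_def by (rule derivative_eq_intros g' refl | simp)+
      then show ?thesis
        by (simp add: has_real_derivative_iff_has_vector_derivative algebra_simps)
    qed
    show "isCont (\<lambda>u. exp (- u) * (g u - g' u)) u" for u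
      using cont cont_g by (intro continuous_intros) (auto simp: continuous_on_eq_continuous_at)
    show "set_integrable lborel (einterval 0 \<infinity>) (\<lambda>u. exp (- u) * (g u - g' u))"
      using int int_g by (subst integrable_expo1_iff_set_integrable[symmetric]) auto
    have "(F \<longlongrightarrow> F 0) (at_right 0)"
      unfolding F_def using cont_g by (intro tendsto_intros) (simp add: isCont_def filterlim_at_split)
    then show "((F \<circ> real_of_ereal) \<longlongrightarrow> F 0) (at_right 0)"
      by (simp add: zero_ereal_def ereal_tendsto_simps1)
    show "((F \<circ> real_of_ereal) \<longlongrightarrow> 0) (at_left \<infinity>)"
      using tendsto_minus[OF lipschitz_mult_exp_neg_tendsto_0[OF g]]
      by (simp add: ereal_tendsto_simps1 F_def)
  qed simp
  moreover have "(LBINT u=0..\<infinity>. exp (- u) * (g u - g' u)) = (\<integral>u. g u - g' u \<partial>expo1)"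
    by (rule integral_expo1_LBINT[symmetric]) measurable
  ultimately show ?thesis
    using int int_g by (simp add: F_def prob_space[simplified])
qed

lemma abs_damped_increment_le:
  fixes f :: "real \<Rightarrow> real"
  assumes f: "L-lipschitz_on UNIV f" and b: "0 \<le> b"
  shows "\<bar>(f (a + u) - f a) * exp (- b * exp (- u))\<bar> \<le> L * \<bar>u\<bar>"
proof -
  have "\<bar>(f (a + u) - f a) * exp (- b * exp (- u))\<bar> \<le> \<bar>f (a + u) - f a\<bar> * 1"
    unfolding abs_mult using b by (intro mult_left_mono) auto
  then show ?thesis
    using lipschitz_on_UNIV_abs_diff[OF f, of "a + u" a] by simp
qed

lemma integrable_expo1_damped_increment:
  fixes f :: "real \<Rightarrow> real"
  assumes f: "L-lipschitz_on UNIV f" and b: "0 \<le> b"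
  shows "integrable expo1 (\<lambda>u. (f (a + u) - f a) * exp (- b * exp (- u)))"
proof (rule Bochner_Integration.integrable_bound)
  show "integrable expo1 (\<lambda>u. L * \<bar>u\<bar>)"
    using integrable_expo1_abs by simp
  show "AE u in expo1. norm ((f (a + u) - f a) * exp (- b * exp (- u))) \<le> norm (L * \<bar>u\<bar>)"
    using abs_damped_increment_le[OF f b] lipschitz_on_nonneg[OF f] by (intro AE_I2) simp
  show "(\<lambda>u. (f (a + u) - f a) * exp (- b * exp (- u))) \<in> borel_measurable expo1"
    using lipschitz_on_UNIV_borel_measurable[OF f] by simp
qed

lemma prob_space_gumbel: "prob_space gumbel"
proof -
  define \<rho> where "\<rho> = (\<lambda>z::real. exp (- (z + exp (- z))))"
  define G where "G = (\<lambda>z::real. exp (- exp (- z)))"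
  have G': "(G has_real_derivative \<rho> z) (at z)" for z
    unfolding G_def \<rho>_def by (rule derivative_eq_intros refl | simp add: mult_exp_exp)+
  have "((G \<circ> real_of_ereal) \<longlongrightarrow> 0) (at_right (-\<infinity>))"
    unfolding ereal_tendsto_simps1 G_def by real_asymp
  moreover have "((G \<circ> real_of_ereal) \<longlongrightarrow> 1) (at_left \<infinity>)"
    unfolding ereal_tendsto_simps1 G_def by real_asymp
  ultimately have "set_integrable lborel UNIV \<rho>" and "(LBINT z=-\<infinity>..\<infinity>. \<rho> z) = 1"
    using interval_integral_FTC_nonneg[of "-\<infinity>" \<infinity> G \<rho>] G' by (auto simp: \<rho>_def)
  then have "(\<integral>\<^sup>+z. ennreal (\<rho> z) \<partial>lborel) = 1"
    by (subst nn_integral_eq_integral)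
       (auto simp: set_integrable_def interval_lebesgue_integral_def
         set_lebesgue_integral_def \<rho>_def)
  then show ?thesis
    by (intro prob_spaceI) (simp add: gumbel_def emeasure_density \<rho>_def)
qed

lemma integral_gumbel_translate:
  fixes K :: "real \<Rightarrow> real"
  assumes [measurable]: "K \<in> borel_measurable borel"
  shows "(\<integral>z. K z \<partial>gumbel) = (\<integral>u. exp (- ((s + u) + exp (- (s + u)))) * K (s + u) \<partial>lborel)"
proof -
  have "(\<integral>z. K z \<partial>gumbel) = (\<integral>z. exp (- (z + exp (- z))) * K z \<partial>lborel)"
    unfolding gumbel_def by (subst integral_density) auto
  also have "\<dots> = (\<integral>u. exp (- ((s + u) + exp (- (s + u)))) * K (s + u) \<partial>lborel)"
    using lborel_integral_real_affine[of 1 "\<lambda>z. exp (- (z + exp (- z))) * K z" s] by simp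
  finally show ?thesis .
qed

lemma integrable_gumbel_translate:
  fixes K :: "real \<Rightarrow> real"
  assumes [measurable]: "K \<in> borel_measurable borel"
  shows "integrable gumbel K \<longleftrightarrow>
    integrable lborel (\<lambda>u. exp (- ((s + u) + exp (- (s + u)))) * K (s + u))"
  using lborel_integrable_real_affine_iff[of 1 "\<lambda>z. exp (- (z + exp (- z))) * K z" s]
  unfolding gumbel_def by (subst integrable_density) auto

lemma integral_gumbel_max:
  fixes f :: "real \<Rightarrow> real"
  assumes f: "L-lipschitz_on UNIV f"
  shows "(\<integral>z. f (max a (z + c)) \<partial>gumbel)
    = f a + exp (c - a) * (\<integral>u. (f (a + u) - f a) * exp (- exp (c - a) * exp (- u)) \<partial>expo1)"
proof -
  interpret prob_space gumbel
    by (rule prob_space_gumbel)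
  define b where "b = exp (c - a)"
  define K where "K = (\<lambda>z. f (max a (z + c)) - f a)"
  define h where "h = (\<lambda>u. (f (a + u) - f a) * exp (- b * exp (- u)))"
  have [measurable]: "f \<in> borel_measurable borel"
    using f by (rule lipschitz_on_UNIV_borel_measurable)
  have K_measurable [measurable]: "K \<in> borel_measurable borel"
    and [measurable]: "h \<in> borel_measurable borel"
    unfolding K_def h_def by measurable
  have substitution:
    "exp (- ((a - c + u) + exp (- (a - c + u)))) * K (a - c + u) = b * (exponential_density 1 u * h u)"
    for u
  proof (cases "u < 0")
    case False
    have shift: "exp (- (a - c + u)) = b * exp (- u)"
      by (simp add: b_def flip: exp_add)
    have "exp (- ((a - c + u) + exp (- (a - c + u))))
        = exp (- (a - c + u)) * exp (- exp (- (a - c + u)))"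
      by (simp add: mult_exp_exp)
    also have "\<dots> = b * exp (- u) * exp (- b * exp (- u))"
      by (simp only: shift) simp
    finally have "exp (- ((a - c + u) + exp (- (a - c + u)))) = b * exp (- u) * exp (- b * exp (- u))" .
    then show ?thesis
      using False by (simp add: K_def h_def exponential_density_1)
  qed (simp add: K_def exponential_density_1)
  have "integrable expo1 h"
    unfolding h_def using f by (intro integrable_expo1_damped_increment) (simp_all add: b_def)
  then have "integrable gumbel K"
    unfolding integrable_gumbel_translate[OF K_measurable, of "a - c"] substitution
    by (simp add: integrable_expo1_density)
  have "(\<integral>z. f (max a (z + c)) \<partial>gumbel) = (\<integral>z. f a + K z \<partial>gumbel)"
    by (simp add: K_def)
  also have "\<dots> = f a + (\<integral>z. K z \<partial>gumbel)"
    using \<open>integrable gumbel K\<close> by (simp add: prob_space)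
  also have "(\<integral>z. K z \<partial>gumbel) = b * (\<integral>u. h u \<partial>expo1)"
    unfolding integral_gumbel_translate[OF K_measurable, of "a - c"] substitution
    by (simp add: integral_expo1_density)
  finally show ?thesis
    by (simp add: b_def h_def)
qed

lemma tendsto_integral_expo1_damped_increment:
  fixes f a b :: "real \<Rightarrow> real"
  assumes f: "L-lipschitz_on UNIV f" and a: "(a \<longlongrightarrow> x) (at_right 0)"
    and b: "(b \<longlongrightarrow> 0) (at_right 0)" and b_nonneg: "\<And>t. 0 < t \<Longrightarrow> 0 \<le> b t"
  shows "((\<lambda>t. \<integral>u. (f (a t + u) - f (a t)) * exp (- b t * exp (- u)) \<partial>expo1)
    \<longlongrightarrow> (\<integral>u. f (x + u) - f x \<partial>expo1)) (at_right 0)"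
proof (rule tendsto_at_right_sequentially[of 0 1])
  fix S :: "nat \<Rightarrow> real"
  assume S_pos: "\<And>n. 0 < S n" and "\<And>n. S n < 1" "decseq S" and "S \<longlonglongrightarrow> 0"
  then have S: "filterlim S (at_right 0) sequentially"
    by (auto simp: filterlim_at intro!: always_eventually less_imp_neq[symmetric])
  have [measurable]: "f \<in> borel_measurable borel"
    using f by (rule lipschitz_on_UNIV_borel_measurable)
  have cont_f: "isCont f y" for y
    using lipschitz_on_continuous_on[OF f] by (simp add: continuous_on_eq_continuous_at)
  show "(\<lambda>n. \<integral>u. (f (a (S n) + u) - f (a (S n))) * exp (- b (S n) * exp (- u)) \<partial>expo1)
    \<longlonglongrightarrow> (\<integral>u. f (x + u) - f x \<partial>expo1)"
  proof (rule integral_dominated_convergence[where w = "\<lambda>u. L * \<bar>u\<bar>"])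
    show "integrable expo1 (\<lambda>u. L * \<bar>u\<bar>)"
      using integrable_expo1_abs by simp
    show "AE u in expo1. (\<lambda>n. (f (a (S n) + u) - f (a (S n))) * exp (- b (S n) * exp (- u)))
      \<longlonglongrightarrow> f (x + u) - f x"
    proof (intro AE_I2)
      fix u
      have "((\<lambda>t. (f (a t + u) - f (a t)) * exp (- b t * exp (- u)))
        \<longlongrightarrow> (f (x + u) - f x) * exp (- 0 * exp (- u))) (at_right 0)"
        using a b by (intro tendsto_intros isCont_tendsto_compose[OF cont_f])
      from filterlim_compose[OF this S]
      show "(\<lambda>n. (f (a (S n) + u) - f (a (S n))) * exp (- b (S n) * exp (- u)))
        \<longlonglongrightarrow> f (x + u) - f x"
        by simp
    qed
    show "AE u in expo1. norm ((f (a (S n) + u) - f (a (S n))) * exp (- b (S n) * exp (- u)))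
      \<le> L * \<bar>u\<bar>" for n
      using abs_damped_increment_le[OF f b_nonneg[OF S_pos]] by (intro AE_I2) simp
  qed (simp only: measurable_expo1, measurable)+
qed simp

lemma P0_has_real_derivative_at_right_0:
  fixes f :: "real \<Rightarrow> real"
  assumes L: "L-lipschitz_on UNIV f" and f': "(f has_real_derivative f') (at x)"
  shows "((\<lambda>t. P0 t f x) has_real_derivative
    - f' + exp (- x) * (\<integral>y. f (x + y) - f x \<partial>expo1)) (at_right 0)"
proof -
  define b where "b = (\<lambda>t. (1 - exp (- t)) * exp (t - x))"
  define J where "J = (\<lambda>t. \<integral>u. (f (x - t + u) - f (x - t)) * exp (- b t * exp (- u)) \<partial>expo1)"
  have quotient: "(P0 t f x - P0 0 f x) / t = (f (x - t) - f x) / t + b t / t * J t" if "0 < t" for t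
  proof -
    have "exp (ln (1 - exp (- t)) - (x - t)) = exp (ln (1 - exp (- t))) * exp (t - x)"
      by (simp flip: exp_add)
    also have "\<dots> = b t"
      using that by (simp add: b_def)
    finally have "exp (ln (1 - exp (- t)) - (x - t)) = b t" .
    then have "P0 t f x = f (x - t) + b t * J t"
      using that integral_gumbel_max[OF L, of "x - t" "ln (1 - exp (- t))"]
      by (simp add: P0_def J_def)
    then show ?thesis
      using that by (simp add: P0_def field_simps)
  qed
  have "((\<lambda>t. (f (x - t) - f x) / t) \<longlongrightarrow> - f') (at_right 0)"
  proof -
    have "(f has_real_derivative f') (at (x - 0))"
      using f' by simp
    then have "((\<lambda>t. f (x - t)) has_real_derivative f' * (0 - 1)) (at_right 0)"
      by (intro DERIV_chain2 derivative_intros)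
    then show ?thesis
      by (simp add: has_field_derivative_iff)
  qed
  moreover have "((\<lambda>t. b t / t) \<longlongrightarrow> exp (- x)) (at_right 0)"
    unfolding b_def by real_asymp
  moreover have "(J \<longlongrightarrow> (\<integral>y. f (x + y) - f x \<partial>expo1)) (at_right 0)"
    unfolding J_def
    by (rule tendsto_integral_expo1_damped_increment[OF L])
       (auto simp: b_def intro!: tendsto_eq_intros)
  ultimately have "((\<lambda>t. (f (x - t) - f x) / t + b t / t * J t)
      \<longlongrightarrow> - f' + exp (- x) * (\<integral>y. f (x + y) - f x \<partial>expo1)) (at_right 0)"
    by (intro tendsto_intros)
  then have "((\<lambda>t. (P0 t f x - P0 0 f x) / t)
      \<longlongrightarrow> - f' + exp (- x) * (\<integral>y. f (x + y) - f x \<partial>expo1)) (at_right 0)"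
    by (rule Lim_transform_eventually)
       (use eventually_at_right_less[of 0] in \<open>eventually_elim, simp add: quotient\<close>)
  then show ?thesis
    by (simp add: has_field_derivative_iff)
qed

theorem proposition2p3:
  fixes f :: "real \<Rightarrow> real" and x :: real
  assumes "Lip2 f"
  shows "((\<lambda>t. P0 t f x) has_real_derivative
            (- deriv f x + exp (- x) * (\<integral>y. f (x + y) - f x \<partial>expo1))) (at_right 0)
       \<and> - deriv f x + exp (- x) * (\<integral>y. f (x + y) - f x \<partial>expo1)
         = - deriv f x + exp (- x) * (\<integral>y. deriv f (x + y) \<partial>expo1)"
proof -
  obtain L M where L: "L-lipschitz_on UNIV f" and M: "M-lipschitz_on UNIV (deriv f)"
    and f': "\<And>y. (f has_real_derivative deriv f y) (at y)"
    using assms DERIV_deriv_iff_real_differentiable unfolding Lip2_def by blast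
  have "(\<integral>y. f (x + y) - f x \<partial>expo1) = (\<integral>y. deriv f (x + y) \<partial>expo1)"
  proof (rule integral_expo1_increment_eq_deriv[OF lipschitz_on_UNIV_shift[OF L], simplified])
    show "((\<lambda>u. f (x + u)) has_real_derivative deriv f (x + u)) (at u)" for u
      using DERIV_chain2[OF f' DERIV_add[OF DERIV_const DERIV_ident], of x u] by simp
    show "continuous_on UNIV (\<lambda>u. deriv f (x + u))"
      using lipschitz_on_continuous_on[OF lipschitz_on_UNIV_shift[OF M]] .
    show "integrable expo1 (\<lambda>u. deriv f (x + u))"
      using integrable_expo1_lipschitz[OF lipschitz_on_UNIV_shift[OF M]] .
  qed
  then show ?thesis
    using P0_has_real_derivative_at_right_0[OF L f'[of x]] by simp
qed

end
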